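(* Let $n\ge1$, $H,K\le S_n$, $\phi:H\to\mathbb C$, $\psi:K\to\mathbb C$ arbitrary functions, and let $Y\subseteq\mathbb S_n(\mathbb C)$ be a set of symmetric matrices with $S_\sigma\in Y$ for every $\sigma\in S_n$. Then $d_\phi^H(A)=d_\psi^K(A)$ for all $A\in Y$ if and only if $d_\phi^H(S_\sigma)=d_\psi^K(S_\sigma)$ for all $\sigma\in S_n$.
   Context: $\mathbb S_n(\mathbb C)$ is the set of complex symmetric $n\times n$ matrices. For $G\le S_n$ and $\chi:G\to\mathbb C$, $\hat\chi$ is the extension of $\chi$ by $0$ outside $G$ and $d_\chi^G(A)=\sum_{\sigma\in S_n}\hat\chi(\sigma)\prod_{i=1}^n A_{i\,\sigma(i)}$. For $\sigma\in S_n$, $S_\sigma$ is the $n\times n$ $0/1$ matrix with $(S_\sigma)_{ij}=1$ iff $\sigma(i)=j$ or $\sigma^{-1}(i)=j$. *)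

theory Defs
  imports Complex_Main "HOL-Algebra.Sym_Groups"
begin

text \<open>n x n complex matrices are represented as functions nat => nat => complex,
  indexed by {1..n}, with all entries outside {1..n} x {1..n} equal to 0
  (canonical representative).\<close>

definition sym_mats :: "nat \<Rightarrow> (nat \<Rightarrow> nat \<Rightarrow> complex) set" where
  "sym_mats n = {A. (\<forall>i\<in>{1..n}. \<forall>j\<in>{1..n}. A i j = A j i) \<and>
                    (\<forall>i j. i \<notin> {1..n} \<or> j \<notin> {1..n} \<longrightarrow> A i j = 0)}"

definition ext0 :: "(nat \<Rightarrow> nat) set \<Rightarrow> ((nat \<Rightarrow> nat) \<Rightarrow> complex) \<Rightarrow> (nat \<Rightarrow> nat) \<Rightarrow> complex" where
  "ext0 G \<chi> \<sigma> = (if \<sigma> \<in> G then \<chi> \<sigma> else 0)"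

definition immanant_d :: "nat \<Rightarrow> (nat \<Rightarrow> nat) set \<Rightarrow> ((nat \<Rightarrow> nat) \<Rightarrow> complex)
    \<Rightarrow> (nat \<Rightarrow> nat \<Rightarrow> complex) \<Rightarrow> complex" where
  "immanant_d n G \<chi> A = (\<Sum>\<sigma>\<in>carrier (sym_group n). ext0 G \<chi> \<sigma> * (\<Prod>i\<in>{1..n}. A i (\<sigma> i)))"

definition S_mat :: "nat \<Rightarrow> (nat \<Rightarrow> nat) \<Rightarrow> (nat \<Rightarrow> nat \<Rightarrow> complex)" where
  "S_mat n \<sigma> = (\<lambda>i j. if i \<in> {1..n} \<and> j \<in> {1..n} \<and> (\<sigma> i = j \<or> Hilbert_Choice.inv \<sigma> i = j) then 1 else 0)"

end

theory Submission
  imports Defs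
begin

text \<open>For a symmetric matrix \<open>A\<close> the monomial \<open>\<Prod>i. A i (\<sigma> i)\<close> depends only on the undirected
  graph of \<open>\<sigma>\<close>, i.e. on the sets \<open>{\<sigma> i, \<sigma>\<^sup>-\<^sup>1 i}\<close>, while \<open>\<Prod>i. S\<^sub>\<tau> i (\<sigma> i)\<close> is \<open>1\<close> if the graph of
  \<open>\<sigma>\<close> is contained in that of \<open>\<tau>\<close> and \<open>0\<close> otherwise. Hence equality on all \<open>S\<^sub>\<tau>\<close> says that the
  coefficient difference \<open>f = \<phi>\<^sup>^ - \<psi>\<^sup>^\<close> sums to zero over every down-set of this containment
  order. Inducting on the number of points in cycles of length at most 2, which strictly drops
  along proper containment, \<open>f\<close> sums to zero over every class of permutations with the same
  graph, and grouping \<open>d\<^sub>\<phi>\<^sup>H(A) - d\<^sub>\<psi>\<^sup>K(A)\<close> by these classes makes it vanish.\<close>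

definition perm_nbrs :: "('a \<Rightarrow> 'a) \<Rightarrow> 'a \<Rightarrow> 'a set" where
  "perm_nbrs \<sigma> i = {\<sigma> i, Hilbert_Choice.inv \<sigma> i}"

lemma perm_nbrs_outside:
  assumes "\<sigma> permutes S" "i \<notin> S"
  shows "perm_nbrs \<sigma> i = {i}"
  using assms permutes_not_in[OF assms(1)] permutes_not_in[OF permutes_inv[OF assms(1)]]
  unfolding perm_nbrs_def by auto

lemma perm_nbrs_eq_iff:
  assumes "\<sigma> permutes S" "\<tau> permutes S"
  shows "perm_nbrs \<sigma> = perm_nbrs \<tau> \<longleftrightarrow> (\<forall>i\<in>S. perm_nbrs \<sigma> i = perm_nbrs \<tau> i)"
  using perm_nbrs_outside[OF assms(1)] perm_nbrs_outside[OF assms(2)] by (auto intro!: ext)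

lemma perm_nbrs_eq_disagreement_closed:
  assumes s: "\<sigma> permutes S" and t: "\<tau> permutes S"
    and nbrs: "\<forall>i\<in>S. perm_nbrs \<sigma> i = perm_nbrs \<tau> i"
  shows "\<sigma> ` {i\<in>S. \<tau> i \<noteq> \<sigma> i} \<subseteq> {i\<in>S. \<tau> i \<noteq> \<sigma> i}"
proof
  fix j assume "j \<in> \<sigma> ` {i\<in>S. \<tau> i \<noteq> \<sigma> i}"
  then obtain i where i: "i \<in> S" "\<tau> i \<noteq> \<sigma> i" and j: "j = \<sigma> i" by auto
  have jS: "j \<in> S" using i j permutes_in_image[OF s] by auto
  have inv_j: "Hilbert_Choice.inv \<sigma> j = i" using j permutes_inverses[OF s] by auto
  have ti: "\<tau> i = Hilbert_Choice.inv \<sigma> i"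
    using nbrs i unfolding perm_nbrs_def by (metis insert_iff singletonD)
  have "i \<in> perm_nbrs \<tau> j" using nbrs jS inv_j unfolding perm_nbrs_def by auto
  then consider "i = \<tau> j" | "\<tau> i = j"
    using permutes_inverses[OF t] unfolding perm_nbrs_def by auto
  then show "j \<in> {i\<in>S. \<tau> i \<noteq> \<sigma> i}"
  proof cases
    case 1
    then show ?thesis using jS i ti j permutes_inverses[OF s] by force
  next
    case 2
    then show ?thesis using i j by auto
  qed
qed

text \<open>On the set \<open>D\<close> where \<open>\<tau>\<close> and \<open>\<sigma>\<close> differ we have \<open>\<tau> = \<sigma>\<^sup>-\<^sup>1\<close>, and reindexing \<open>D\<close> by \<open>\<sigma>\<close>
  together with symmetry of \<open>A\<close> turns \<open>\<Prod>i\<in>D. A i (\<sigma>\<^sup>-\<^sup>1 i)\<close> into \<open>\<Prod>i\<in>D. A i (\<sigma> i)\<close>.\<close>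
lemma prod_eq_if_perm_nbrs_eq:
  fixes A :: "'a \<Rightarrow> 'a \<Rightarrow> 'b::comm_monoid_mult"
  assumes s: "\<sigma> permutes S" and t: "\<tau> permutes S" and fin: "finite S"
    and sym: "\<forall>i\<in>S. \<forall>j\<in>S. A i j = A j i"
    and nbrs: "\<forall>i\<in>S. perm_nbrs \<sigma> i = perm_nbrs \<tau> i"
  shows "(\<Prod>i\<in>S. A i (\<tau> i)) = (\<Prod>i\<in>S. A i (\<sigma> i))"
proof -
  define D where "D = {i\<in>S. \<tau> i \<noteq> \<sigma> i}"
  have DS: "D \<subseteq> S" and finD: "finite D" using fin unfolding D_def by auto
  have t_inv: "\<tau> i = Hilbert_Choice.inv \<sigma> i" if "i \<in> D" for i
    using nbrs that unfolding D_def perm_nbrs_def by (metis (mono_tags) insert_iff mem_Collect_eq singletonD)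
  have inj: "inj_on \<sigma> D" using permutes_inj_on[OF s] .
  have "\<sigma> ` D = D"
    using endo_inj_surj[OF finD _ inj] perm_nbrs_eq_disagreement_closed[OF s t nbrs] D_def by auto
  then have "(\<Prod>i\<in>D. A i (\<tau> i)) = (\<Prod>j\<in>D. A (\<sigma> j) (Hilbert_Choice.inv \<sigma> (\<sigma> j)))"
    using prod.reindex[OF inj, of "\<lambda>i. A i (Hilbert_Choice.inv \<sigma> i)"] t_inv by simp
  also have "\<dots> = (\<Prod>j\<in>D. A j (\<sigma> j))"
    using DS sym permutes_in_image[OF s] permutes_inverses[OF s] by (intro prod.cong) auto
  finally have onD: "(\<Prod>i\<in>D. A i (\<tau> i)) = (\<Prod>i\<in>D. A i (\<sigma> i))" .
  have offD: "(\<Prod>i\<in>S-D. A i (\<tau> i)) = (\<Prod>i\<in>S-D. A i (\<sigma> i))"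
    by (rule prod.cong) (auto simp: D_def)
  show ?thesis
    using prod.subset_diff[OF DS fin, of "\<lambda>i. A i (\<tau> i)"] prod.subset_diff[OF DS fin, of "\<lambda>i. A i (\<sigma> i)"]
      onD offD by simp
qed

lemma perm_nbrs_subset_iff:
  assumes s: "\<sigma> permutes S" and t: "\<tau> permutes S"
  shows "(\<forall>i\<in>S. perm_nbrs \<sigma> i \<subseteq> perm_nbrs \<tau> i) \<longleftrightarrow>
         (\<forall>i\<in>S. \<sigma> i = \<tau> i \<or> \<sigma> i = Hilbert_Choice.inv \<tau> i)"
proof
  assume "\<forall>i\<in>S. perm_nbrs \<sigma> i \<subseteq> perm_nbrs \<tau> i"
  then show "\<forall>i\<in>S. \<sigma> i = \<tau> i \<or> \<sigma> i = Hilbert_Choice.inv \<tau> i" unfolding perm_nbrs_def by auto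
next
  assume h: "\<forall>i\<in>S. \<sigma> i = \<tau> i \<or> \<sigma> i = Hilbert_Choice.inv \<tau> i"
  show "\<forall>i\<in>S. perm_nbrs \<sigma> i \<subseteq> perm_nbrs \<tau> i"
  proof
    fix i assume iS: "i \<in> S"
    define k where "k = Hilbert_Choice.inv \<sigma> i"
    have "k \<in> S" using k_def iS permutes_in_image[OF permutes_inv[OF s]] by auto
    moreover have "\<sigma> k = i" using k_def permutes_inverses[OF s] by auto
    ultimately have "k = Hilbert_Choice.inv \<tau> i \<or> k = \<tau> i"
      using h permutes_inverses[OF t] by metis
    then show "perm_nbrs \<sigma> i \<subseteq> perm_nbrs \<tau> i" using h iS k_def unfolding perm_nbrs_def by auto
  qed
qed

lemma prod_S_mat:
  assumes s: "\<sigma> permutes {1..n}" and t: "\<tau> permutes {1..n}"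
  shows "(\<Prod>i\<in>{1..n}. S_mat n \<tau> i (\<sigma> i)) =
         (if \<forall>i\<in>{1..n}. perm_nbrs \<sigma> i \<subseteq> perm_nbrs \<tau> i then 1 else 0)"
proof -
  have entry: "S_mat n \<tau> i (\<sigma> i) = (if \<sigma> i = \<tau> i \<or> \<sigma> i = Hilbert_Choice.inv \<tau> i then 1 else 0)"
    if "i \<in> {1..n}" for i
    using that permutes_in_image[OF s, of i] unfolding S_mat_def by auto
  show ?thesis
    unfolding perm_nbrs_subset_iff[OF s t] using entry
    by (auto intro!: prod.neutral prod_zero)
qed

definition short_cycle_card :: "'a set \<Rightarrow> ('a \<Rightarrow> 'a) \<Rightarrow> nat" where
  "short_cycle_card S \<sigma> = card {i\<in>S. \<sigma> i = Hilbert_Choice.inv \<sigma> i}"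

lemma short_cycle_card_le: "finite S \<Longrightarrow> short_cycle_card S \<sigma> \<le> card S"
  unfolding short_cycle_card_def by (rule card_mono) auto

lemma short_cycle_card_less:
  assumes "finite S"
    and sub: "\<forall>i\<in>S. perm_nbrs \<sigma> i \<subseteq> perm_nbrs \<tau> i"
    and ne: "\<exists>i\<in>S. perm_nbrs \<sigma> i \<noteq> perm_nbrs \<tau> i"
  shows "short_cycle_card S \<tau> < short_cycle_card S \<sigma>"
  unfolding short_cycle_card_def
proof (intro psubset_card_mono psubsetI)
  show "{i\<in>S. \<tau> i = Hilbert_Choice.inv \<tau> i} \<subseteq> {i\<in>S. \<sigma> i = Hilbert_Choice.inv \<sigma> i}"
    using sub unfolding perm_nbrs_def by fastforce
  obtain i where "i \<in> S" "perm_nbrs \<sigma> i \<noteq> perm_nbrs \<tau> i" using ne by blast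
  with sub have "i \<in> S" "\<sigma> i = Hilbert_Choice.inv \<sigma> i" "\<tau> i \<noteq> Hilbert_Choice.inv \<tau> i"
    unfolding perm_nbrs_def by auto
  then show "{i\<in>S. \<tau> i = Hilbert_Choice.inv \<tau> i} \<noteq> {i\<in>S. \<sigma> i = Hilbert_Choice.inv \<sigma> i}"
    by blast
qed (use assms(1) in auto)

lemma sum_eq_0_if_fibre_sums_eq_0:
  fixes f :: "'a \<Rightarrow> 'b::comm_monoid_add"
  assumes "finite R" and "\<And>x. x \<in> R \<Longrightarrow> (\<Sum>y\<in>{y\<in>R. g y = g x}. f y) = 0"
  shows "sum f R = 0"
proof -
  have "sum f R = (\<Sum>z\<in>g ` R. \<Sum>y\<in>{y\<in>R. g y = z}. f y)"
    using sum.image_gen[OF assms(1)] by blast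
  also have "\<dots> = 0" using assms(2) by (intro sum.neutral) auto
  finally show ?thesis .
qed

text \<open>Each down-set is its graph class plus a union of strictly smaller graph classes.\<close>
lemma perm_nbrs_class_sum_eq_0:
  fixes f :: "('a \<Rightarrow> 'a) \<Rightarrow> 'b::comm_monoid_add"
  assumes fin: "finite S"
    and down: "\<And>\<tau>. \<tau> permutes S \<Longrightarrow>
      (\<Sum>\<sigma>\<in>{\<sigma>. \<sigma> permutes S \<and> (\<forall>i\<in>S. perm_nbrs \<sigma> i \<subseteq> perm_nbrs \<tau> i)}. f \<sigma>) = 0"
    and t: "\<tau> permutes S"
  shows "(\<Sum>\<rho>\<in>{\<rho>. \<rho> permutes S \<and> perm_nbrs \<rho> = perm_nbrs \<tau>}. f \<rho>) = 0"
  using t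
proof (induction \<tau> rule: measure_induct_rule[where f = "\<lambda>\<tau>. card S - short_cycle_card S \<tau>"])
  case (less \<tau>)
  define N where "N = {\<sigma>. \<sigma> permutes S \<and> (\<forall>i\<in>S. perm_nbrs \<sigma> i \<subseteq> perm_nbrs \<tau> i)}"
  define E where "E = {\<rho>. \<rho> permutes S \<and> perm_nbrs \<rho> = perm_nbrs \<tau>}"
  have EN: "E \<subseteq> N" and finN: "finite N"
    using finite_permutations[OF fin] unfolding E_def N_def by auto
  have "sum f (N - E) = 0"
  proof (rule sum_eq_0_if_fibre_sums_eq_0[where g = perm_nbrs])
    fix \<sigma> assume \<sigma>: "\<sigma> \<in> N - E"
    then have s: "\<sigma> permutes S" and sub: "\<forall>i\<in>S. perm_nbrs \<sigma> i \<subseteq> perm_nbrs \<tau> i"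
      and "perm_nbrs \<sigma> \<noteq> perm_nbrs \<tau>"
      unfolding N_def E_def by auto
    then have "\<exists>i\<in>S. perm_nbrs \<sigma> i \<noteq> perm_nbrs \<tau> i"
      using perm_nbrs_eq_iff[OF s less.prems] by blast
    then have "card S - short_cycle_card S \<sigma> < card S - short_cycle_card S \<tau>"
      using short_cycle_card_less[OF fin sub] short_cycle_card_le[OF fin, of \<sigma>] by linarith
    moreover have "{\<rho>\<in>N - E. perm_nbrs \<rho> = perm_nbrs \<sigma>} = {\<rho>. \<rho> permutes S \<and> perm_nbrs \<rho> = perm_nbrs \<sigma>}"
    proof -
      have "\<rho> \<in> N" if "\<rho> permutes S" "perm_nbrs \<rho> = perm_nbrs \<sigma>" for \<rho>
        using that sub unfolding N_def by simp
      moreover have "N \<subseteq> {\<rho>. \<rho> permutes S}" unfolding N_def by blast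
      ultimately show ?thesis using \<sigma> unfolding E_def by auto
    qed
    ultimately show "(\<Sum>\<rho>\<in>{\<rho>\<in>N - E. perm_nbrs \<rho> = perm_nbrs \<sigma>}. f \<rho>) = 0"
      using less.IH s by simp
  qed (use finN in auto)
  moreover have "sum f N = 0" unfolding N_def using down[OF less.prems] .
  ultimately show ?case
    using sum.subset_diff[OF EN finN, of f] unfolding E_def by simp
qed

lemma immanant_d_diff:
  "immanant_d n H \<phi> A - immanant_d n K \<psi> A =
   (\<Sum>\<sigma>\<in>{\<sigma>. \<sigma> permutes {1..n}}. (ext0 H \<phi> \<sigma> - ext0 K \<psi> \<sigma>) * (\<Prod>i\<in>{1..n}. A i (\<sigma> i)))"
  unfolding immanant_d_def sym_group_def by (simp add: sum_subtractf left_diff_distrib)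

lemma immanant_d_eq_if_class_sums_eq_0:
  assumes "A \<in> sym_mats n"
    and class0: "\<And>\<tau>. \<tau> permutes {1..n} \<Longrightarrow>
      (\<Sum>\<rho>\<in>{\<rho>. \<rho> permutes {1..n} \<and> perm_nbrs \<rho> = perm_nbrs \<tau>}. ext0 H \<phi> \<rho> - ext0 K \<psi> \<rho>) = 0"
  shows "immanant_d n H \<phi> A = immanant_d n K \<psi> A"
proof -
  let ?P = "{\<sigma>. \<sigma> permutes {1..n}}"
  let ?f = "\<lambda>\<sigma>. ext0 H \<phi> \<sigma> - ext0 K \<psi> \<sigma>"
  let ?m = "\<lambda>\<sigma>. \<Prod>i\<in>{1..n}. A i (\<sigma> i)"
  have sym: "\<forall>i\<in>{1..n}. \<forall>j\<in>{1..n}. A i j = A j i" using assms(1) by (simp add: sym_mats_def)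
  have "(\<Sum>\<sigma>\<in>?P. ?f \<sigma> * ?m \<sigma>) = 0"
  proof (rule sum_eq_0_if_fibre_sums_eq_0[where g = perm_nbrs])
    fix \<tau> assume t: "\<tau> \<in> ?P"
    have "(\<Sum>\<rho>\<in>{\<rho>\<in>?P. perm_nbrs \<rho> = perm_nbrs \<tau>}. ?f \<rho> * ?m \<rho>)
        = (\<Sum>\<rho>\<in>{\<rho>\<in>?P. perm_nbrs \<rho> = perm_nbrs \<tau>}. ?f \<rho> * ?m \<tau>)"
    proof (rule sum.cong)
      fix \<rho> assume "\<rho> \<in> {\<rho>\<in>?P. perm_nbrs \<rho> = perm_nbrs \<tau>}"
      then have "\<rho> permutes {1..n}" "\<forall>i\<in>{1..n}. perm_nbrs \<tau> i = perm_nbrs \<rho> i" by auto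
      then show "?f \<rho> * ?m \<rho> = ?f \<rho> * ?m \<tau>"
        using prod_eq_if_perm_nbrs_eq[of \<tau> "{1..n}" \<rho> A] t sym by simp
    qed simp
    also have "\<dots> = 0"
      using class0[of \<tau>] t by (simp add: sum_distrib_right[symmetric])
    finally show "(\<Sum>\<rho>\<in>{\<rho>\<in>?P. perm_nbrs \<rho> = perm_nbrs \<tau>}. ?f \<rho> * ?m \<rho>) = 0" .
  qed (simp add: finite_permutations)
  then show ?thesis using immanant_d_diff[of n H \<phi> A K \<psi>] by simp
qed

lemma perm_nbrs_down_sum_eq_0_if_S_mat_eq:
  assumes "\<forall>\<sigma>\<in>carrier (sym_group n). immanant_d n H \<phi> (S_mat n \<sigma>) = immanant_d n K \<psi> (S_mat n \<sigma>)"
    and t: "\<tau> permutes {1..n}"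
  shows "(\<Sum>\<sigma>\<in>{\<sigma>. \<sigma> permutes {1..n} \<and> (\<forall>i\<in>{1..n}. perm_nbrs \<sigma> i \<subseteq> perm_nbrs \<tau> i)}.
           ext0 H \<phi> \<sigma> - ext0 K \<psi> \<sigma>) = 0"
proof -
  let ?P = "{\<sigma>. \<sigma> permutes {1..n}}"
  let ?f = "\<lambda>\<sigma>. ext0 H \<phi> \<sigma> - ext0 K \<psi> \<sigma>"
  have "0 = (\<Sum>\<sigma>\<in>?P. ?f \<sigma> * (\<Prod>i\<in>{1..n}. S_mat n \<tau> i (\<sigma> i)))"
    using assms immanant_d_diff[of n H \<phi> "S_mat n \<tau>" K \<psi>] by (simp add: sym_group_carrier)
  also have "\<dots> = (\<Sum>\<sigma>\<in>?P. if \<forall>i\<in>{1..n}. perm_nbrs \<sigma> i \<subseteq> perm_nbrs \<tau> i then ?f \<sigma> else 0)"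
    using prod_S_mat t by (intro sum.cong) auto
  also have "\<dots> = (\<Sum>\<sigma>\<in>{\<sigma>\<in>?P. \<forall>i\<in>{1..n}. perm_nbrs \<sigma> i \<subseteq> perm_nbrs \<tau> i}. ?f \<sigma>)"
    by (rule sum.inter_filter[symmetric]) (simp add: finite_permutations)
  finally show ?thesis by simp
qed

theorem mainTheorem7:
  fixes n :: nat and H K :: "(nat \<Rightarrow> nat) set"
    and \<phi> \<psi> :: "(nat \<Rightarrow> nat) \<Rightarrow> complex"
    and Y :: "(nat \<Rightarrow> nat \<Rightarrow> complex) set"
  assumes "n \<ge> 1"
    and "subgroup H (sym_group n)" and "subgroup K (sym_group n)"
    and "Y \<subseteq> sym_mats n"
    and "\<forall>\<sigma>\<in>carrier (sym_group n). S_mat n \<sigma> \<in> Y"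
  shows "(\<forall>A\<in>Y. immanant_d n H \<phi> A = immanant_d n K \<psi> A) \<longleftrightarrow>
         (\<forall>\<sigma>\<in>carrier (sym_group n). immanant_d n H \<phi> (S_mat n \<sigma>) = immanant_d n K \<psi> (S_mat n \<sigma>))"
proof
  assume "\<forall>\<sigma>\<in>carrier (sym_group n). immanant_d n H \<phi> (S_mat n \<sigma>) = immanant_d n K \<psi> (S_mat n \<sigma>)"
  then have class0: "(\<Sum>\<rho>\<in>{\<rho>. \<rho> permutes {1..n} \<and> perm_nbrs \<rho> = perm_nbrs \<tau>}. ext0 H \<phi> \<rho> - ext0 K \<psi> \<rho>) = 0"
    if "\<tau> permutes {1..n}" for \<tau>
    using perm_nbrs_class_sum_eq_0[OF _ perm_nbrs_down_sum_eq_0_if_S_mat_eq that] by simp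
  show "\<forall>A\<in>Y. immanant_d n H \<phi> A = immanant_d n K \<psi> A"
    using assms(4) immanant_d_eq_if_class_sums_eq_0[OF _ class0] by blast
qed (use assms(5) in blast)

end
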